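(* Let $q$ be a prime power, $n\ge 1$, and let $\ell$ be an integer with $1\le \ell\le n(q-1)$ and $\ell\equiv 0\pmod{q-1}$. Then the all-ones vector $\mathbf{1}=(1,\dots,1)\in\mathbb{F}_q^N$ does not lie in $C_{n,\ell}^q$. In particular, $C_{n,n(q-1)}^q$ is an LCD code, i.e. $C_{n,n(q-1)}^q\cap (C_{n,n(q-1)}^q)^\perp=\{0\}$.
   Context: For a prime power $q$ and integers $n\ge 1$, $k\ge 0$, the projective Reed-Muller code $C_{n,k}^q\subseteq \mathbb{F}_q^N$, $N=\frac{q^{n+1}-1}{q-1}$, is defined as follows. For each point of $\mathbb{P}^n(\mathbb{F}_q)$ choose the affine representative $(p_0,\dots,p_n)\in\mathbb{F}_q^{n+1}\setminus\{0\}$ whose left-most nonzero coordinate equals $1$, and fix an ordering $P_1',\dots,P_N'$ of these representatives. Then $C_{n,k}^q=\{(F(P_1'),\dots,F(P_N')) : F\in \mathbb{F}_q[x_0,\dots,x_n]_k\}$, where $\mathbb{F}_q[x_0,\dots,x_n]_k$ is the space of homogeneous polynomials of degree $k$ together with $0$. For $C\subseteq\mathbb{F}_q^N$ linear, $C^\perp=\{y:\sum_i y_ic_i=0\ \forall c\in C\}$ (standard dot product), and $\operatorname{Hull}(C)=C\cap C^\perp$. $C$ is LCD if $\operatorname{Hull}(C)=\{0\}$. *)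

theory Defs
  imports Main
begin

text \<open>Points of P^n(F_q): the normalized affine representatives
  (p_0,...,p_n) (functions nat => 'a vanishing above n) whose left-most
  nonzero coordinate equals 1.\<close>
definition proj_reps :: "nat \<Rightarrow> (nat \<Rightarrow> 'a::field) set" where
  "proj_reps n = {p. (\<forall>i>n. p i = 0) \<and> (\<exists>i\<le>n. p i \<noteq> 0)
                      \<and> p (LEAST i. p i \<noteq> 0) = 1}"

definition monomials :: "nat \<Rightarrow> nat \<Rightarrow> (nat \<Rightarrow> nat) set" where
  "monomials n k = {a. (\<forall>i>n. a i = 0) \<and> (\<Sum>i\<le>n. a i) = k}"

definition hom_poly_eval ::
  "nat \<Rightarrow> nat \<Rightarrow> ((nat \<Rightarrow> nat) \<Rightarrow> 'a::field) \<Rightarrow> (nat \<Rightarrow> 'a) \<Rightarrow> 'a" where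
  "hom_poly_eval n k c p = (\<Sum>a\<in>monomials n k. c a * (\<Prod>i\<le>n. p i ^ a i))"

text \<open>Words of F_q^N are functions on the index set proj_reps n (the N points),
  extended by 0 outside it. The projective Reed-Muller code C_{n,k}.\<close>
definition proj_RM :: "nat \<Rightarrow> nat \<Rightarrow> ((nat \<Rightarrow> 'a::field) \<Rightarrow> 'a) set" where
  "proj_RM n k = {w. \<exists>c. w = (\<lambda>p. if p \<in> proj_reps n then hom_poly_eval n k c p else 0)}"

definition dual_code :: "'i set \<Rightarrow> ('i \<Rightarrow> 'a::field) set \<Rightarrow> ('i \<Rightarrow> 'a) set" where
  "dual_code I C = {y. (\<forall>p. p \<notin> I \<longrightarrow> y p = 0) \<and> (\<forall>w\<in>C. (\<Sum>p\<in>I. y p * w p) = 0)}"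

definition hull_code :: "'i set \<Rightarrow> ('i \<Rightarrow> 'a::field) set \<Rightarrow> ('i \<Rightarrow> 'a) set" where
  "hull_code I C = C \<inter> dual_code I C"

definition is_LCD :: "'i set \<Rightarrow> ('i \<Rightarrow> 'a::field) set \<Rightarrow> bool" where
  "is_LCD I C \<longleftrightarrow> hull_code I C = {\<lambda>_. 0}"

definition all_ones :: "'i set \<Rightarrow> ('i \<Rightarrow> 'a::field)" where
  "all_ones I = (\<lambda>p. if p \<in> I then 1 else 0)"

end

theory Submission
  imports Defs "HOL-Computational_Algebra.Polynomial" "HOL-Library.FuncSet"
begin

text \<open>
  Write \<open>q\<close> for the size of the field. Suppose the homogeneous polynomial \<open>F\<close> of degree \<open>l\<close>,
  \<open>1 \<le> l \<le> n(q - 1)\<close>, \<open>(q - 1) dvd l\<close>, takes the value 1 on every projective point.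
  By homogeneity and Fermat, \<open>F\<close> is then 1 on all of \<open>F_q^(n+1) - {0}\<close> and 0 at 0,
  so its sum over \<open>F_q^(n+1)\<close> is \<open>q^(n+1) - 1 = -1\<close>. On the other hand every monomial
  of degree \<open>l < (n+1)(q - 1)\<close> has an exponent that is not a positive multiple of
  \<open>q - 1\<close>, and the power sum \<open>\<Sum>t. t^e\<close> vanishes for such exponents, so the sum is 0.

  For the LCD property, the products \<open>\<Prod>i\<noteq>k. x_k^(q-1) - (x_i - p_i x_k)^(q-1)\<close> have
  degree \<open>n(q - 1)\<close> and, evaluated on projective points, differ for two points
  \<open>p, p'\<close> with \<open>p_k, p'_k \<noteq> 0\<close> exactly by the indicator of \<open>p\<close> minus that of \<open>p'\<close>.
  Hence every word of the dual code is constant, i.e. a multiple of the all-ones word,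
  which does not lie in the code.
\<close>

section \<open>Finite fields\<close>

lemma of_nat_card_UNIV_eq_0: "of_nat (card (UNIV :: 'a set)) = (0 :: 'a::{finite,ring_1})"
proof -
  have "(\<Sum>t\<in>(UNIV::'a set). t) = (\<Sum>t\<in>UNIV. t + 1)"
    by (rule sum.reindex_bij_witness[of _ "\<lambda>t. t + 1" "\<lambda>t. t - 1"]) auto
  also have "\<dots> = (\<Sum>t\<in>UNIV. t) + of_nat (card (UNIV :: 'a set))"
    by (simp add: sum.distrib)
  finally show ?thesis by simp
qed

lemma one_le_card_UNIV_minus_one: "1 \<le> card (UNIV :: 'a::{finite,zero_neq_one} set) - 1"
proof -
  have "card {0::'a, 1} \<le> card (UNIV :: 'a set)"
    by (rule card_mono) auto
  thus ?thesis by simp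
qed

lemma power_card_UNIV_minus_one:
  fixes x :: "'a::{finite,field}"
  assumes "x \<noteq> 0"
  shows "x ^ (card (UNIV :: 'a set) - 1) = 1"
proof -
  let ?U = "UNIV - {0::'a}"
  have "(\<Prod>t\<in>?U. t) = (\<Prod>t\<in>?U. x * t)"
    by (rule prod.reindex_bij_witness[of _ "\<lambda>t. x * t" "\<lambda>t. t / x"]) (use assms in auto)
  also have "\<dots> = x ^ card ?U * (\<Prod>t\<in>?U. t)"
    by (simp add: prod.distrib)
  finally have "x ^ card ?U = 1"
    by (metis (no_types, lifting) DiffD2 insertCI mult_cancel_right1 prod_zero_iff finite)
  thus ?thesis by (simp add: card_Diff_singleton)
qed

lemma ex_power_neq_1:
  assumes "1 \<le> r" "r < card (UNIV :: 'a set) - 1"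
  shows "\<exists>x::'a::{finite,field}. x \<noteq> 0 \<and> x ^ r \<noteq> 1"
proof (rule ccontr)
  assume no_witness: "\<not> ?thesis"
  define p :: "'a poly" where "p = monom 1 r - 1"
  have "coeff p r = 1"
    using assms by (simp add: p_def coeff_monom)
  hence p: "p \<noteq> 0" by auto
  have "degree p \<le> r"
    unfolding p_def by (metis degree_diff_le degree_monom_le degree_1 le0)
  have "UNIV - {0} \<subseteq> {x. poly p x = 0}"
    using no_witness by (auto simp: p_def poly_monom)
  hence "card (UNIV - {0::'a}) \<le> card {x. poly p x = 0}"
    by (intro card_mono poly_roots_finite p)
  also have "\<dots> \<le> r"
    using card_poly_roots_bound[OF p] \<open>degree p \<le> r\<close> by linarith
  finally show False
    using assms by (simp add: card_Diff_singleton)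
qed

lemma sum_UNIV_power_eq_0:
  assumes "\<not> (1 \<le> k \<and> (card (UNIV :: 'a::{finite,field} set) - 1) dvd k)"
  shows "(\<Sum>t\<in>(UNIV::'a set). t ^ k) = 0"
proof (cases "k = 0")
  case True
  thus ?thesis using of_nat_card_UNIV_eq_0[where 'a='a] by simp
next
  case False
  let ?q1 = "card (UNIV :: 'a set) - 1"
  have r: "1 \<le> k mod ?q1" "k mod ?q1 < ?q1"
    using assms False one_le_card_UNIV_minus_one[where 'a='a] by (auto simp: dvd_eq_mod_eq_0)
  obtain x :: 'a where x: "x \<noteq> 0" "x ^ (k mod ?q1) \<noteq> 1"
    using ex_power_neq_1[OF r] by blast
  have "x ^ k = x ^ (k mod ?q1) * (x ^ ?q1) ^ (k div ?q1)"
    by (simp add: power_add[symmetric] power_mult[symmetric] mult.commute)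
  hence "x ^ k \<noteq> 1"
    using x power_card_UNIV_minus_one[OF x(1)] by simp
  have "(\<Sum>t\<in>(UNIV::'a set). t ^ k) = (\<Sum>t\<in>UNIV. (x * t) ^ k)"
    by (rule sum.reindex_bij_witness[of _ "\<lambda>t. x * t" "\<lambda>t. t / x"]) (use x in auto)
  also have "\<dots> = x ^ k * (\<Sum>t\<in>UNIV. t ^ k)"
    by (simp add: power_mult_distrib sum_distrib_left)
  finally show ?thesis
    using \<open>x ^ k \<noteq> 1\<close> by (metis mult_cancel_right1)
qed

section \<open>Homogeneous polynomial functions\<close>

definition hom_poly_fun :: "nat \<Rightarrow> nat \<Rightarrow> ((nat \<Rightarrow> 'a::field) \<Rightarrow> 'a) \<Rightarrow> bool" where
  "hom_poly_fun n k f \<longleftrightarrow> (\<exists>c. f = hom_poly_eval n k c)"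

lemma finite_monomials: "finite (monomials n k)"
proof -
  have "a i \<le> k" if "a \<in> monomials n k" "i \<le> n" for a i
    using that member_le_sum[of i "{..n}" a] by (simp add: monomials_def)
  hence "monomials n k \<subseteq> {a. \<forall>i. (i \<in> {..n} \<longrightarrow> a i \<in> {..k}) \<and> (i \<notin> {..n} \<longrightarrow> a i = 0)}"
    by (auto simp: monomials_def)
  thus ?thesis
    by (rule finite_subset) (rule finite_set_of_finite_funs; simp)
qed

lemma hom_poly_eval_homogeneous:
  "hom_poly_eval n k c (\<lambda>i. t * x i) = t ^ k * hom_poly_eval n k c x"
proof -
  have "(\<Prod>i\<le>n. (t * x i) ^ a i) = t ^ k * (\<Prod>i\<le>n. x i ^ a i)" if "a \<in> monomials n k" for a
  proof -
    have "(\<Prod>i\<le>n. t ^ a i) = t ^ (\<Sum>i\<le>n. a i)"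
      by (simp add: power_sum)
    also have "\<dots> = t ^ k"
      using that by (simp add: monomials_def)
    finally show ?thesis by (simp add: power_mult_distrib prod.distrib)
  qed
  thus ?thesis
    unfolding hom_poly_eval_def sum_distrib_left by (intro sum.cong) (auto simp: mult_ac)
qed

lemma hom_poly_eval_add:
  "hom_poly_eval n k (\<lambda>a. c a + d a) x = hom_poly_eval n k c x + hom_poly_eval n k d x"
  by (simp add: hom_poly_eval_def distrib_right sum.distrib)

lemma hom_poly_eval_cmult: "hom_poly_eval n k (\<lambda>a. t * c a) x = t * hom_poly_eval n k c x"
  by (simp add: hom_poly_eval_def sum_distrib_left mult.assoc)

lemma hom_poly_fun_add:
  assumes "hom_poly_fun n k f" "hom_poly_fun n k g"
  shows "hom_poly_fun n k (\<lambda>x. f x + g x)"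
proof -
  obtain c d where "f = hom_poly_eval n k c" "g = hom_poly_eval n k d"
    using assms unfolding hom_poly_fun_def by blast
  thus ?thesis
    unfolding hom_poly_fun_def
    by (intro exI[of _ "\<lambda>a. c a + d a"]) (simp add: hom_poly_eval_add fun_eq_iff)
qed

lemma hom_poly_fun_cmult:
  assumes "hom_poly_fun n k f"
  shows "hom_poly_fun n k (\<lambda>x. t * f x)"
proof -
  obtain c where "f = hom_poly_eval n k c"
    using assms unfolding hom_poly_fun_def by blast
  thus ?thesis
    unfolding hom_poly_fun_def
    by (intro exI[of _ "\<lambda>a. t * c a"]) (simp add: hom_poly_eval_cmult fun_eq_iff)
qed

lemma hom_poly_fun_diff:
  "hom_poly_fun n k f \<Longrightarrow> hom_poly_fun n k g \<Longrightarrow> hom_poly_fun n k (\<lambda>x. f x - g x)"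
  using hom_poly_fun_add[of n k f "\<lambda>x. (-1) * g x"] hom_poly_fun_cmult[of n k g "-1"] by simp

lemma hom_poly_fun_const: "hom_poly_fun n 0 (\<lambda>x. t)"
proof -
  have "monomials n 0 = {\<lambda>_. 0}"
    by (auto simp: monomials_def fun_eq_iff) (metis atMost_iff not_le)
  thus ?thesis
    unfolding hom_poly_fun_def hom_poly_eval_def by (intro exI[of _ "\<lambda>_. t"]) (simp add: fun_eq_iff)
qed

lemma hom_poly_fun_var:
  assumes "i \<le> n"
  shows "hom_poly_fun n 1 (\<lambda>x. x i)"
proof -
  define e :: "nat \<Rightarrow> nat" where "e = (\<lambda>j. if j = i then 1 else 0)"
  have e: "e \<in> monomials n 1"
    using assms by (auto simp: monomials_def e_def)
  have "(\<Prod>j\<le>n. x j ^ e j) = (\<Prod>j\<le>n. if j = i then x j else 1)" for x :: "nat \<Rightarrow> 'a"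
    by (rule prod.cong) (auto simp: e_def)
  hence "(\<Prod>j\<le>n. x j ^ e j) = x i" for x :: "nat \<Rightarrow> 'a"
    using assms by simp
  moreover have "hom_poly_eval n 1 (\<lambda>a. if a = e then 1 else 0) x
      = (\<Sum>a\<in>monomials n 1. if a = e then (\<Prod>j\<le>n. x j ^ a j) else 0)" for x :: "nat \<Rightarrow> 'a"
    unfolding hom_poly_eval_def by (rule sum.cong) auto
  ultimately have "hom_poly_eval n 1 (\<lambda>a. if a = e then 1 else 0) x = x i" for x :: "nat \<Rightarrow> 'a"
    using e finite_monomials by simp
  thus ?thesis
    unfolding hom_poly_fun_def by (intro exI[of _ "\<lambda>a. if a = e then 1 else 0"]) (simp add: fun_eq_iff)
qed

lemma hom_poly_fun_mult:
  assumes "hom_poly_fun n k1 f" "hom_poly_fun n k2 g"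
  shows "hom_poly_fun n (k1 + k2) (\<lambda>x. f x * g x)"
proof -
  obtain c1 c2 where f: "f = hom_poly_eval n k1 c1" and g: "g = hom_poly_eval n k2 c2"
    using assms by (auto simp: hom_poly_fun_def)
  define S where "S = monomials n k1 \<times> monomials n k2"
  define s where "s = (\<lambda>(a::nat \<Rightarrow> nat, b::nat \<Rightarrow> nat) i. a i + b i)"
  define h where "h = (\<lambda>(a, b). c1 a * c2 b)"
  have "s ` S \<subseteq> monomials n (k1 + k2)"
    by (auto simp: S_def s_def monomials_def sum.distrib)
  have "f x * g x = hom_poly_eval n (k1 + k2) (\<lambda>m. \<Sum>ab\<in>{ab \<in> S. s ab = m}. h ab) x"
    for x :: "nat \<Rightarrow> 'a"
  proof -
    let ?P = "\<lambda>a. \<Prod>i\<le>n. x i ^ a i"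
    have "f x * g x = (\<Sum>ab\<in>S. h ab * ?P (s ab))"
      unfolding f g hom_poly_eval_def sum_product S_def sum.cartesian_product
      by (rule sum.cong) (auto simp: h_def s_def power_add prod.distrib mult_ac)
    also have "\<dots> = (\<Sum>m\<in>monomials n (k1 + k2). \<Sum>ab\<in>{ab \<in> S. s ab = m}. h ab * ?P (s ab))"
      using finite_monomials \<open>s ` S \<subseteq> _\<close> by (intro sum.group[symmetric]) (auto simp: S_def)
    also have "\<dots> = hom_poly_eval n (k1 + k2) (\<lambda>m. \<Sum>ab\<in>{ab \<in> S. s ab = m}. h ab) x"
      unfolding hom_poly_eval_def sum_distrib_right by (intro sum.cong refl) auto
    finally show ?thesis .
  qed
  thus ?thesis
    unfolding hom_poly_fun_def fun_eq_iff by blast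
qed

lemma hom_poly_fun_power: "hom_poly_fun n d f \<Longrightarrow> hom_poly_fun n (m * d) (\<lambda>x. f x ^ m)"
proof (induction m)
  case 0
  thus ?case using hom_poly_fun_const by simp
next
  case (Suc m)
  thus ?case using hom_poly_fun_mult[OF Suc.prems Suc.IH[OF Suc.prems]] by simp
qed

lemma hom_poly_fun_prod:
  assumes "finite A" "\<And>i. i \<in> A \<Longrightarrow> hom_poly_fun n d (f i)"
  shows "hom_poly_fun n (card A * d) (\<lambda>x. \<Prod>i\<in>A. f i x)"
  using assms
proof (induction A rule: finite_induct)
  case empty
  thus ?case using hom_poly_fun_const by simp
next
  case (insert a A)
  thus ?case using hom_poly_fun_mult[of n d "f a" "card A * d"] by simp
qed

lemma proj_RM_cmult:
  assumes "w \<in> proj_RM n k"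
  shows "(\<lambda>p. t * w p) \<in> proj_RM n k"
proof -
  obtain c where "w = (\<lambda>p. if p \<in> proj_reps n then hom_poly_eval n k c p else 0)"
    using assms unfolding proj_RM_def by blast
  thus ?thesis
    unfolding proj_RM_def
    by (intro CollectI exI[of _ "\<lambda>a. t * c a"]) (simp add: hom_poly_eval_cmult fun_eq_iff)
qed

lemma zero_in_proj_RM: "(\<lambda>_. 0) \<in> proj_RM n k"
  unfolding proj_RM_def hom_poly_eval_def by (auto intro!: exI[of _ "\<lambda>_. 0"])

lemma hom_poly_fun_in_proj_RM:
  "hom_poly_fun n k f \<Longrightarrow> (\<lambda>p. if p \<in> proj_reps n then f p else 0) \<in> proj_RM n k"
  unfolding hom_poly_fun_def proj_RM_def by auto

definition affine_points :: "nat \<Rightarrow> (nat \<Rightarrow> 'a::zero) set" where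
  "affine_points n = {x. \<forall>i>n. x i = 0}"

lemma sum_affine_points_prod:
  fixes g :: "nat \<Rightarrow> 'a::{finite,zero} \<Rightarrow> 'b::comm_semiring_1"
  shows "(\<Sum>x\<in>affine_points n. \<Prod>i\<le>n. g i (x i)) = (\<Prod>i\<le>n. \<Sum>t\<in>UNIV. g i t)"
proof -
  have "(\<Prod>i\<le>n. \<Sum>t\<in>UNIV. g i t) = (\<Sum>h\<in>PiE {..n} (\<lambda>_. UNIV). \<Prod>i\<le>n. g i (h i))"
    by (rule prod_sum_PiE) auto
  also have "\<dots> = (\<Sum>x\<in>affine_points n. \<Prod>i\<le>n. g i (x i))"
    by (rule sum.reindex_bij_witness[of _ "\<lambda>x. restrict x {..n}" "\<lambda>h i. if i \<le> n then h i else 0"])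
       (auto simp: affine_points_def PiE_def extensional_def fun_eq_iff)
  finally show ?thesis ..
qed

lemma finite_affine_points: "finite (affine_points n :: (nat \<Rightarrow> 'a::{finite,zero}) set)"
proof -
  have "affine_points n \<subseteq> {x::nat \<Rightarrow> 'a. \<forall>i. (i \<in> {..n} \<longrightarrow> x i \<in> UNIV) \<and> (i \<notin> {..n} \<longrightarrow> x i = 0)}"
    by (auto simp: affine_points_def)
  thus ?thesis
    by (rule finite_subset) (rule finite_set_of_finite_funs; simp)
qed

lemma finite_proj_reps: "finite (proj_reps n :: (nat \<Rightarrow> 'a::{finite,field}) set)"
  by (rule finite_subset[OF _ finite_affine_points]) (auto simp: proj_reps_def affine_points_def)

lemma proj_reps_cmult_eq:
  assumes "x \<in> proj_reps n" "p \<in> proj_reps n" "\<And>i. x i = t * p i"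
  shows "x = p"
proof -
  have "t \<noteq> 0"
    using assms(1,3) by (auto simp: proj_reps_def)
  hence "(x i \<noteq> 0) = (p i \<noteq> 0)" for i
    using assms(3) by simp
  hence "(LEAST i. x i \<noteq> 0) = (LEAST i. p i \<noteq> 0)" by simp
  hence "t = 1"
    using assms by (auto simp: proj_reps_def)
  thus ?thesis using assms(3) by auto
qed

lemma affine_point_eq_cmult_proj_rep:
  fixes x :: "nat \<Rightarrow> 'a::field"
  assumes "x \<in> affine_points n" "x \<noteq> (\<lambda>_. 0)"
  obtains p t where "p \<in> proj_reps n" "t \<noteq> 0" "x = (\<lambda>i. t * p i)"
proof -
  define j where "j = (LEAST i. x i \<noteq> 0)"
  obtain i0 where "x i0 \<noteq> 0"
    using assms(2) by auto
  hence "x j \<noteq> 0"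
    unfolding j_def by (rule LeastI)
  hence "j \<le> n"
    using assms(1) not_le by (auto simp: affine_points_def)
  define p where "p = (\<lambda>i. x i / x j)"
  have "(p i \<noteq> 0) = (x i \<noteq> 0)" for i
    using \<open>x j \<noteq> 0\<close> by (simp add: p_def)
  hence "(LEAST i. p i \<noteq> 0) = j"
    unfolding j_def by simp
  hence "p \<in> proj_reps n"
    using \<open>x j \<noteq> 0\<close> \<open>j \<le> n\<close> assms(1) by (auto simp: proj_reps_def affine_points_def p_def)
  moreover have "x = (\<lambda>i. x j * p i)"
    using \<open>x j \<noteq> 0\<close> by (simp add: p_def fun_eq_iff)
  ultimately show ?thesis using that \<open>x j \<noteq> 0\<close> by blast
qed

section \<open>The all-ones word is not a codeword\<close>

lemma sum_affine_points_hom_poly_eval_eq_0: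
  fixes c :: "(nat \<Rightarrow> nat) \<Rightarrow> 'a::{finite,field}"
  assumes "l < Suc n * (card (UNIV :: 'a set) - 1)"
  shows "(\<Sum>x\<in>affine_points n. hom_poly_eval n l c x) = 0"
proof -
  let ?q1 = "card (UNIV :: 'a set) - 1"
  have "(\<Sum>x\<in>affine_points n. \<Prod>i\<le>n. (x i :: 'a) ^ a i) = 0" if "a \<in> monomials n l" for a
  proof -
    have "\<exists>i\<le>n. \<not> (1 \<le> a i \<and> ?q1 dvd a i)"
    proof (rule ccontr)
      assume "\<not> ?thesis"
      hence "(\<Sum>i\<le>n. ?q1) \<le> (\<Sum>i\<le>n. a i)"
        by (intro sum_mono) (auto simp: Suc_le_eq intro: dvd_imp_le)
      thus False using that assms by (simp add: monomials_def)
    qed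
    then obtain i where "i \<le> n" "(\<Sum>t\<in>(UNIV::'a set). t ^ a i) = 0"
      using sum_UNIV_power_eq_0 by blast
    moreover have "(\<Sum>x\<in>affine_points n. \<Prod>i\<le>n. (x i :: 'a) ^ a i) = (\<Prod>i\<le>n. \<Sum>t\<in>UNIV. t ^ a i)"
      by (rule sum_affine_points_prod)
    ultimately show ?thesis
      by (metis atMost_iff finite_atMost prod_zero)
  qed
  thus ?thesis
    unfolding hom_poly_eval_def by (subst sum.swap) (simp add: sum_distrib_left[symmetric])
qed

lemma all_ones_notin_proj_RM:
  assumes "1 \<le> l" "l \<le> n * (card (UNIV :: 'a::{finite,field} set) - 1)" "(card (UNIV :: 'a set) - 1) dvd l"
  shows "all_ones (proj_reps n) \<notin> (proj_RM n l :: ((nat \<Rightarrow> 'a) \<Rightarrow> 'a) set)"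
proof
  assume "all_ones (proj_reps n) \<in> (proj_RM n l :: ((nat \<Rightarrow> 'a) \<Rightarrow> 'a) set)"
  then obtain c :: "(nat \<Rightarrow> nat) \<Rightarrow> 'a" where
    one: "\<And>p. p \<in> proj_reps n \<Longrightarrow> hom_poly_eval n l c p = 1"
    by (auto simp: proj_RM_def all_ones_def fun_eq_iff split: if_splits)
  let ?F = "hom_poly_eval n l c"
  have F: "?F x = 1 - (if x = (\<lambda>_. 0) then 1 else 0)" if "x \<in> affine_points n" for x
  proof (cases "x = (\<lambda>_. 0)")
    case True
    have "?F (\<lambda>i. 0 * x i) = 0"
      unfolding hom_poly_eval_homogeneous using assms(1) by simp
    thus ?thesis using True by simp
  next
    case False
    then obtain p t where "p \<in> proj_reps n" "t \<noteq> 0" "x = (\<lambda>i. t * p i)"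
      using affine_point_eq_cmult_proj_rep \<open>x \<in> affine_points n\<close> by metis
    moreover obtain m where "l = (card (UNIV :: 'a set) - 1) * m"
      using assms(3) by blast
    ultimately have "?F x = (t ^ (card (UNIV :: 'a set) - 1)) ^ m"
      using one by (simp add: hom_poly_eval_homogeneous power_mult)
    thus ?thesis using False power_card_UNIV_minus_one[OF \<open>t \<noteq> 0\<close>] by simp
  qed
  let ?A = "affine_points n :: (nat \<Rightarrow> 'a) set"
  have "(\<Sum>x\<in>?A. 1) = (0::'a)"
    using sum_affine_points_prod[of "\<lambda>_ (_::'a). 1::'a" n] of_nat_card_UNIV_eq_0[where 'a='a]
    by simp
  hence "(\<Sum>x\<in>?A. ?F x) = - 1"
    using finite_affine_points[where 'a='a]
    by (simp add: F sum_subtractf affine_points_def)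
  moreover have "(\<Sum>x\<in>affine_points n. ?F x) = 0"
    using one_le_card_UNIV_minus_one[where 'a='a] assms(2)
    by (intro sum_affine_points_hom_poly_eval_eq_0) simp
  ultimately show False by simp
qed

section \<open>The dual of the code of degree \<open>n(q - 1)\<close>\<close>

text \<open>
  By Fermat, on points with \<open>x k \<noteq> 0\<close> this is the indicator of \<open>x\<close> being a
  multiple of \<open>p\<close> (when \<open>p k = 1\<close>), while on points with \<open>x k = 0\<close> it does not depend on \<open>p\<close>.
\<close>
definition line_indicator :: "nat \<Rightarrow> nat \<Rightarrow> (nat \<Rightarrow> 'a::{finite,field}) \<Rightarrow> (nat \<Rightarrow> 'a) \<Rightarrow> 'a" where
  "line_indicator n k p x =
     (\<Prod>i\<in>{..n} - {k}. x k ^ (card (UNIV :: 'a set) - 1) - (x i - p i * x k) ^ (card (UNIV :: 'a set) - 1))"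

lemma hom_poly_fun_line_indicator:
  assumes "k \<le> n"
  shows "hom_poly_fun n (n * (card (UNIV :: 'a set) - 1)) (line_indicator n k (p :: nat \<Rightarrow> 'a::{finite,field}))"
proof -
  let ?q1 = "card (UNIV :: 'a set) - 1"
  have "hom_poly_fun n ?q1 (\<lambda>x. x k ^ ?q1 - (x i - p i * x k) ^ ?q1)" if "i \<le> n" for i
  proof -
    have "hom_poly_fun n (?q1 * 1) (\<lambda>x. x k ^ ?q1)"
      by (intro hom_poly_fun_power hom_poly_fun_var assms)
    moreover have "hom_poly_fun n (?q1 * 1) (\<lambda>x. (x i - p i * x k) ^ ?q1)"
      by (intro hom_poly_fun_power hom_poly_fun_diff hom_poly_fun_cmult hom_poly_fun_var assms that)
    ultimately show ?thesis
      using hom_poly_fun_diff by fastforce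
  qed
  hence "hom_poly_fun n (card ({..n} - {k}) * ?q1) (line_indicator n k p)"
    unfolding line_indicator_def[abs_def] by (intro hom_poly_fun_prod) auto
  thus ?thesis using assms by simp
qed

lemma line_indicator_nonzero:
  fixes x p :: "nat \<Rightarrow> 'a::{finite,field}"
  assumes "x k \<noteq> 0" "p k = 1" "k \<le> n"
  shows "line_indicator n k p x = (if \<forall>i\<le>n. x i = p i * x k then 1 else 0)"
proof -
  let ?q1 = "card (UNIV :: 'a set) - 1"
  have "x k ^ ?q1 - (x i - p i * x k) ^ ?q1 = (if x i = p i * x k then 1 else 0)" for i
    using power_card_UNIV_minus_one[OF assms(1)] power_card_UNIV_minus_one[of "x i - p i * x k"]
      one_le_card_UNIV_minus_one[where 'a='a] by auto
  hence "line_indicator n k p x = (\<Prod>i\<in>{..n} - {k}. if x i = p i * x k then 1 else 0)"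
    unfolding line_indicator_def by simp
  also have "\<dots> = (if \<forall>i\<in>{..n} - {k}. x i = p i * x k then 1 else 0)"
  proof (cases "\<forall>i\<in>{..n} - {k}. x i = p i * x k")
    case False
    then obtain i where "i \<in> {..n} - {k}" "x i \<noteq> p i * x k" by blast
    thus ?thesis by (intro trans[OF prod_zero]) auto
  qed simp
  also have "(\<forall>i\<in>{..n} - {k}. x i = p i * x k) \<longleftrightarrow> (\<forall>i\<le>n. x i = p i * x k)"
    using assms(2) by auto
  finally show ?thesis .
qed

lemma line_indicator_zero:
  "x k = 0 \<Longrightarrow> line_indicator n k p x = line_indicator n k p' x"
  by (simp add: line_indicator_def)

lemma dual_code_proj_RM_top_degree_eq:
  fixes y :: "(nat \<Rightarrow> 'a::{finite,field}) \<Rightarrow> 'a"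
  assumes y: "y \<in> dual_code (proj_reps n) (proj_RM n (n * (card (UNIV :: 'a set) - 1)))"
    and p: "p \<in> proj_reps n" "p k \<noteq> 0" and p': "p' \<in> proj_reps n" "p' k \<noteq> 0" and "k \<le> n"
  shows "y p = y p'"
proof -
  let ?I = "proj_reps n :: (nat \<Rightarrow> 'a) set"
  define G where "G x = line_indicator n k (\<lambda>i. p i / p k) x - line_indicator n k (\<lambda>i. p' i / p' k) x" for x
  have indicator: "line_indicator n k (\<lambda>i. r i / r k) x = (if x = r then 1 else 0)"
    if "r \<in> ?I" "r k \<noteq> 0" "x \<in> ?I" "x k \<noteq> 0" for r x
  proof -
    have "(\<forall>i\<le>n. x i = r i / r k * x k) \<longleftrightarrow> x = r"
    proof
      assume "\<forall>i\<le>n. x i = r i / r k * x k"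
      hence "x i = x k / r k * r i" for i
        using that by (cases "i \<le> n") (auto simp: proj_reps_def)
      thus "x = r" using proj_reps_cmult_eq \<open>x \<in> ?I\<close> \<open>r \<in> ?I\<close> by blast
    qed (use that in auto)
    thus ?thesis using that \<open>k \<le> n\<close> by (simp add: line_indicator_nonzero)
  qed
  have "G x = (if x = p then 1 else 0) - (if x = p' then 1 else 0)" if "x \<in> ?I" for x
    using that p p' indicator line_indicator_zero unfolding G_def by (cases "x k = 0") auto
  define v where "v x = (if x \<in> ?I then G x else 0)" for x
  have v: "v \<in> proj_RM n (n * (card (UNIV :: 'a set) - 1))"
    unfolding v_def[abs_def] G_def[abs_def]
    by (intro hom_poly_fun_in_proj_RM hom_poly_fun_diff hom_poly_fun_line_indicator \<open>k \<le> n\<close>)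
  have "y p - y p' = (\<Sum>x\<in>?I. (if x = p then y x else 0) - (if x = p' then y x else 0))"
    using finite_proj_reps[where 'a='a] p p' by (simp add: sum_subtractf sum.delta)
  also have "\<dots> = (\<Sum>x\<in>?I. y x * v x)"
    using \<open>\<And>x. x \<in> ?I \<Longrightarrow> G x = _\<close> by (intro sum.cong) (auto simp: v_def)
  also have "\<dots> = 0"
    using y v unfolding dual_code_def by blast
  finally show ?thesis by simp
qed

lemma dual_code_proj_RM_top_degree_multiple_all_ones:
  fixes y :: "(nat \<Rightarrow> 'a::{finite,field}) \<Rightarrow> 'a"
  assumes "y \<in> dual_code (proj_reps n) (proj_RM n (n * (card (UNIV :: 'a set) - 1)))"
  shows "\<exists>c. y = (\<lambda>p. c * all_ones (proj_reps n) p)"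
proof -
  define u :: "nat \<Rightarrow> 'a" where "u i = (if i \<le> n then 1 else 0)" for i
  have "(LEAST i. u i \<noteq> 0) = 0"
    by (rule Least_equality) (auto simp: u_def)
  hence u: "u \<in> proj_reps n"
    by (auto simp: proj_reps_def u_def)
  text \<open>\<open>u\<close> has no zero coordinate, so it shares a nonzero coordinate with every point.\<close>
  have "y p = y u" if p: "p \<in> proj_reps n" for p
  proof -
    obtain k where "k \<le> n" "p k \<noteq> 0"
      using p by (auto simp: proj_reps_def)
    thus ?thesis
      using dual_code_proj_RM_top_degree_eq[OF assms p _ u] by (simp add: u_def)
  qed
  hence "y = (\<lambda>p. y u * all_ones (proj_reps n) p)"
    using assms by (auto simp: all_ones_def dual_code_def fun_eq_iff)
  thus ?thesis ..
qed

lemma is_LCD_if_dual_code_multiples_all_ones: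
  fixes C :: "('i \<Rightarrow> 'a::field) set"
  assumes "(\<lambda>_. 0) \<in> C" "\<And>w t. w \<in> C \<Longrightarrow> (\<lambda>p. t * w p) \<in> C"
    and "\<And>y. y \<in> dual_code I C \<Longrightarrow> \<exists>c. y = (\<lambda>p. c * all_ones I p)"
    and "all_ones I \<notin> C"
  shows "is_LCD I C"
  unfolding is_LCD_def hull_code_def
proof (intro set_eqI iffI)
  fix w assume w: "w \<in> C \<inter> dual_code I C"
  then obtain c where c: "w = (\<lambda>p. c * all_ones I p)"
    using assms(3) by blast
  have "c = 0"
  proof (rule ccontr)
    assume "c \<noteq> 0"
    hence "all_ones I = (\<lambda>p. inverse c * w p)"
      by (simp add: c fun_eq_iff field_simps)
    thus False using assms(2,4) w by auto
  qed
  thus "w \<in> {\<lambda>_. 0}" by (simp add: c)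
qed (use assms(1) in \<open>auto simp: dual_code_def\<close>)

theorem mainTheorem3:
  fixes n :: nat
    and C :: "nat \<Rightarrow> ((nat \<Rightarrow> 'a::{finite,field}) \<Rightarrow> 'a) set"
  defines "C \<equiv> proj_RM n"
  assumes "n \<ge> 1"
  shows "(\<forall>l::nat. 1 \<le> l \<and> l \<le> n * (card (UNIV :: 'a set) - 1)
             \<and> (card (UNIV :: 'a set) - 1) dvd l
           \<longrightarrow> all_ones (proj_reps n) \<notin> C l)
       \<and> is_LCD (proj_reps n) (C (n * (card (UNIV :: 'a set) - 1)))"
proof
  show "\<forall>l. 1 \<le> l \<and> l \<le> n * (card (UNIV :: 'a set) - 1) \<and> (card (UNIV :: 'a set) - 1) dvd l
          \<longrightarrow> all_ones (proj_reps n) \<notin> C l"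
    unfolding C_def using all_ones_notin_proj_RM by blast
  have "1 \<le> n * (card (UNIV :: 'a set) - 1)"
    using \<open>n \<ge> 1\<close> one_le_card_UNIV_minus_one[where 'a='a] by simp
  hence "all_ones (proj_reps n) \<notin> C (n * (card (UNIV :: 'a set) - 1))"
    unfolding C_def by (intro all_ones_notin_proj_RM) auto
  thus "is_LCD (proj_reps n) (C (n * (card (UNIV :: 'a set) - 1)))"
    unfolding C_def
    by (intro is_LCD_if_dual_code_multiples_all_ones zero_in_proj_RM proj_RM_cmult
        dual_code_proj_RM_top_degree_multiple_all_ones)
qed

end
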